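(* Let $E$ be a finite nonempty set. (1) For every CAR mechanism $\pi$ on $E$ and every $\epsilon>0$ there exists a rational CAR mechanism $\pi'$ on $E$ with $\|\pi-\pi'\|<\epsilon$. (2) Every CAR mechanism on $E$ is exactly equal to a finite mixture of extreme CAR mechanisms, each of which is rational (hence generated by a uniform multicover). Equivalently, every CAR mechanism arises from the following procedure for suitable choices of finitely many uniform multicovers $\mathcal C_1,\dots,\mathcal C_p$ of $E$ (of heights $k_1,\dots,k_p$) and a probability vector $(\lambda_1,\dots,\lambda_p)$: given $x\in E$, choose index $j$ with probability $\lambda_j$ independently of $x$, then choose uniformly at random (probability $1/k_j$ each, counting multiplicity) one of the $k_j$ sets of $\mathcal C_j$ containing $x$. *)

theory Defs
  imports Complex_Main "HOL-Library.Multiset"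
begin

text \<open>A CAR (coarsening at random) mechanism on a finite set E: the probability
 pi(A|x) of reporting the nonempty set A \<subseteq> E when the true value is x \<in> A depends
 only on A; we represent it by the function A \<mapsto> pi(A).\<close>
definition car_mech :: "'a set \<Rightarrow> ('a set \<Rightarrow> real) \<Rightarrow> bool" where
  "car_mech E \<pi> \<longleftrightarrow>
     (\<forall>A. (A \<subseteq> E \<and> A \<noteq> {} \<longrightarrow> \<pi> A \<ge> 0) \<and> (\<not> (A \<subseteq> E \<and> A \<noteq> {}) \<longrightarrow> \<pi> A = 0)) \<and>
     (\<forall>x\<in>E. (\<Sum>A\<in>{A. A \<subseteq> E \<and> x \<in> A}. \<pi> A) = 1)"

definition rational_car :: "'a set \<Rightarrow> ('a set \<Rightarrow> real) \<Rightarrow> bool" where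
  "rational_car E \<pi> \<longleftrightarrow> car_mech E \<pi> \<and> (\<forall>A. \<pi> A \<in> \<rat>)"

definition extreme_car :: "'a set \<Rightarrow> ('a set \<Rightarrow> real) \<Rightarrow> bool" where
  "extreme_car E \<pi> \<longleftrightarrow> car_mech E \<pi> \<and>
     \<not> (\<exists>\<pi>1 \<pi>2 t. car_mech E \<pi>1 \<and> car_mech E \<pi>2 \<and> \<pi>1 \<noteq> \<pi>2 \<and> 0 < t \<and> t < 1 \<and>
          \<pi> = (\<lambda>A. t * \<pi>1 A + (1 - t) * \<pi>2 A))"

text \<open>Distance between mechanisms (l1-norm over the coordinates A \<subseteq> E; all norms
 on this finite-dimensional space are equivalent).\<close>
definition car_dist :: "'a set \<Rightarrow> ('a set \<Rightarrow> real) \<Rightarrow> ('a set \<Rightarrow> real) \<Rightarrow> real" where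
  "car_dist E \<pi> \<pi>' = (\<Sum>A\<in>Pow E. \<bar>\<pi> A - \<pi>' A\<bar>)"

definition uniform_multicover :: "'a set \<Rightarrow> 'a set multiset \<Rightarrow> nat \<Rightarrow> bool" where
  "uniform_multicover E C k \<longleftrightarrow> 0 < k \<and>
     (\<forall>A\<in>#C. A \<subseteq> E \<and> A \<noteq> {}) \<and>
     (\<forall>x\<in>E. size (filter_mset (\<lambda>A. x \<in> A) C) = k)"

text \<open>The mechanism generated by a uniform multicover C of height k:
 given x, choose uniformly one of the k members of C containing x.\<close>
definition generated_mech :: "'a set multiset \<Rightarrow> nat \<Rightarrow> 'a set \<Rightarrow> real" where
  "generated_mech C k A = real (count C A) / real k"

end

theory Submission
  imports Defs
begin

(* The CAR mechanisms on E form a polytope: pi(A) >= 0 together with the rational linear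
   equations sum_{A containing x} pi(A) = 1. Call a mechanism rigid if no nonzero perturbation
   supported on its support preserves these equations. A rigid mechanism is an extreme point, and
   it is the unique solution of a rational linear system on its support, hence rational;
   clearing denominators turns a rational mechanism into a uniform multicover. A mechanism that
   is not rigid can be pushed in both directions along such a perturbation until a further
   coordinate vanishes, which writes it as a convex combination of two mechanisms of smaller
   support; induction on the size of the support yields a finite mixture of rigid mechanisms.
   Approximating the weights of this mixture by rationals gives density of the rational
   mechanisms. *)

section \<open>Rational solutions of rational linear systems\<close>

lemma eliminate_variable:
  fixes a a0 z :: "'v \<Rightarrow> real"
  assumes "finite V" "v \<notin> V" "a0 v \<noteq> 0"
    and pivot: "(\<Sum>u\<in>insert v V. a0 u * z u) = b0"
  shows "(\<Sum>u\<in>insert v V. a u * z u) = b \<longleftrightarrow>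
         (\<Sum>u\<in>V. (a u - a v / a0 v * a0 u) * z u) = b - a v / a0 v * b0"
proof -
  have "(\<Sum>u\<in>V. (a u - a v / a0 v * a0 u) * z u)
      = (\<Sum>u\<in>V. a u * z u) - a v / a0 v * (\<Sum>u\<in>V. a0 u * z u)"
    by (simp add: algebra_simps sum_subtractf sum_distrib_left)
  moreover have "(\<Sum>u\<in>V. a0 u * z u) = b0 - a0 v * z v"
    using pivot assms(1,2) by simp
  moreover have "a v / a0 v * (a0 v * z v) = a v * z v"
    using assms(3) by simp
  moreover have "(\<Sum>u\<in>insert v V. a u * z u) = a v * z v + (\<Sum>u\<in>V. a u * z u)"
    using assms(1,2) by simp
  ultimately show ?thesis
    by (simp add: right_diff_distrib) linarith
qed

lemma rational_solution_if_real_solution: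
  fixes a :: "'i \<Rightarrow> 'v \<Rightarrow> real" and b :: "'i \<Rightarrow> real"
  assumes "finite V"
    and "\<And>i u. i \<in> I \<Longrightarrow> u \<in> V \<Longrightarrow> a i u \<in> \<rat>" and "\<And>i. i \<in> I \<Longrightarrow> b i \<in> \<rat>"
    and "\<And>i. i \<in> I \<Longrightarrow> (\<Sum>u\<in>V. a i u * y u) = b i"
  shows "\<exists>z. (\<forall>u\<in>V. z u \<in> \<rat>) \<and> (\<forall>i\<in>I. (\<Sum>u\<in>V. a i u * z u) = b i)"
  using assms
proof (induction V arbitrary: a b y rule: finite_induct)
  case empty
  then show ?case by auto
next
  case (insert v V)
  show ?case
  proof (cases "\<exists>i0\<in>I. a i0 v \<noteq> 0")
    case False
    then have "\<And>i. i \<in> I \<Longrightarrow> (\<Sum>u\<in>V. a i u * y u) = b i"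
      using insert.prems(3) insert.hyps by fastforce
    then obtain z where z: "\<forall>u\<in>V. z u \<in> \<rat>" "\<forall>i\<in>I. (\<Sum>u\<in>V. a i u * z u) = b i"
      using insert.IH[of a b y] insert.prems(1,2) by blast
    have "(\<Sum>u\<in>V. a i u * (z(v := 0)) u) = (\<Sum>u\<in>V. a i u * z u)" for i
      using insert.hyps(2) by (intro sum.cong) auto
    then show ?thesis
      using z False insert.hyps by (intro exI[of _ "z(v := 0)"]) auto
  next
    case True
    then obtain i0 where i0: "i0 \<in> I" "a i0 v \<noteq> 0" by blast
    define a' where "a' i u = a i u - a i v / a i0 v * a i0 u" for i u
    define b' where "b' i = b i - a i v / a i0 v * b i0" for i
    have elim: "(\<Sum>u\<in>insert v V. a i u * x u) = b i \<longleftrightarrow> (\<Sum>u\<in>V. a' i u * x u) = b' i"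
      if "i \<in> I" "(\<Sum>u\<in>insert v V. a i0 u * x u) = b i0" for i x
      unfolding a'_def b'_def using insert.hyps i0(2) that(2) by (rule eliminate_variable)
    have "\<And>i u. i \<in> I \<Longrightarrow> u \<in> V \<Longrightarrow> a' i u \<in> \<rat>" "\<And>i. i \<in> I \<Longrightarrow> b' i \<in> \<rat>"
      using insert.prems(1,2) i0(1) by (auto simp: a'_def b'_def)
    moreover have "\<And>i. i \<in> I \<Longrightarrow> (\<Sum>u\<in>V. a' i u * y u) = b' i"
      using elim insert.prems(3) i0(1) by blast
    ultimately obtain z where z: "\<forall>u\<in>V. z u \<in> \<rat>" "\<forall>i\<in>I. (\<Sum>u\<in>V. a' i u * z u) = b' i"
      using insert.IH by blast
    define z' where "z' = z(v := (b i0 - (\<Sum>u\<in>V. a i0 u * z u)) / a i0 v)"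
    have on_V: "(\<Sum>u\<in>V. c u * z' u) = (\<Sum>u\<in>V. c u * z u)" for c
      using insert.hyps(2) by (intro sum.cong) (auto simp: z'_def)
    have pivot: "(\<Sum>u\<in>insert v V. a i0 u * z' u) = b i0"
      using insert.hyps i0(2) on_V by (simp add: z'_def)
    have "z' v \<in> \<rat>"
      using insert.prems(1,2) i0(1) z(1) unfolding z'_def
      by (auto intro!: Rats_divide Rats_diff Rats_mult)
    then show ?thesis
      using z on_V elim[OF _ pivot] insert.hyps(2) by (intro exI[of _ z']) (auto simp: z'_def)
  qed
qed

section \<open>Rigid CAR mechanisms\<close>

lemma car_mech_nonneg: "car_mech E \<pi> \<Longrightarrow> 0 \<le> \<pi> A"
  unfolding car_mech_def by (metis order_refl)

lemma car_mech_outside: "car_mech E \<pi> \<Longrightarrow> \<not> (A \<subseteq> E \<and> A \<noteq> {}) \<Longrightarrow> \<pi> A = 0"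
  unfolding car_mech_def by blast

lemma car_mech_sum_eq_1: "car_mech E \<pi> \<Longrightarrow> x \<in> E \<Longrightarrow> (\<Sum>A\<in>{A. A \<subseteq> E \<and> x \<in> A}. \<pi> A) = 1"
  unfolding car_mech_def by blast

lemma car_mech_le_1:
  assumes "finite E" "car_mech E \<pi>"
  shows "\<pi> A \<le> 1"
proof (cases "A \<subseteq> E \<and> A \<noteq> {}")
  case True
  then obtain x where x: "x \<in> A" "x \<in> E" by blast
  have "\<pi> A \<le> (\<Sum>B\<in>{B. B \<subseteq> E \<and> x \<in> B}. \<pi> B)"
    using x True assms by (intro member_le_sum) (auto simp: car_mech_nonneg)
  then show ?thesis
    using car_mech_sum_eq_1[OF assms(2) x(2)] by simp
next
  case False
  then show ?thesis using car_mech_outside[OF assms(2)] by simp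
qed

definition car_support :: "'a set \<Rightarrow> ('a set \<Rightarrow> real) \<Rightarrow> 'a set set" where
  "car_support E \<pi> = {A. A \<subseteq> E \<and> \<pi> A \<noteq> 0}"

definition car_direction :: "'a set \<Rightarrow> ('a set \<Rightarrow> real) \<Rightarrow> ('a set \<Rightarrow> real) \<Rightarrow> bool" where
  "car_direction E \<pi> d \<longleftrightarrow>
     (\<forall>A. \<pi> A = 0 \<longrightarrow> d A = 0) \<and> (\<forall>x\<in>E. (\<Sum>A\<in>{A. A \<subseteq> E \<and> x \<in> A}. d A) = 0)"

definition car_rigid :: "'a set \<Rightarrow> ('a set \<Rightarrow> real) \<Rightarrow> bool" where
  "car_rigid E \<pi> \<longleftrightarrow> (\<forall>d. car_direction E \<pi> d \<longrightarrow> d = (\<lambda>_. 0))"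

lemma car_direction_uminus: "car_direction E \<pi> d \<Longrightarrow> car_direction E \<pi> (\<lambda>A. - d A)"
  unfolding car_direction_def by (simp add: sum_negf)

lemma car_direction_diff:
  assumes "car_mech E \<pi>" "car_mech E \<sigma>" "\<And>A. \<pi> A = 0 \<Longrightarrow> \<sigma> A = 0"
  shows "car_direction E \<pi> (\<lambda>A. \<pi> A - \<sigma> A)"
  using assms car_mech_sum_eq_1[OF assms(1)] car_mech_sum_eq_1[OF assms(2)]
  unfolding car_direction_def by (simp add: sum_subtractf)

lemma car_rigid_eq:
  assumes "car_rigid E \<pi>" "car_direction E \<pi> (\<lambda>A. \<pi> A - \<sigma> A)"
  shows "\<pi> = \<sigma>"
proof
  fix A
  have "(\<lambda>A. \<pi> A - \<sigma> A) = (\<lambda>_. 0)"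
    using assms unfolding car_rigid_def by blast
  then show "\<pi> A = \<sigma> A"
    by (simp add: fun_eq_iff)
qed

lemma car_rigid_imp_extreme:
  assumes car: "car_mech E \<pi>" and rigid: "car_rigid E \<pi>"
  shows "extreme_car E \<pi>"
  unfolding extreme_car_def
proof (intro conjI notI car, elim exE conjE)
  fix \<pi>1 \<pi>2 t
  assume car1: "car_mech E \<pi>1" and car2: "car_mech E \<pi>2" and "\<pi>1 \<noteq> \<pi>2" "0 < t" "t < 1"
    and \<pi>: "\<pi> = (\<lambda>A. t * \<pi>1 A + (1 - t) * \<pi>2 A)"
  have "\<pi>1 A = 0" if "\<pi> A = 0" for A
  proof -
    have "0 \<le> t * \<pi>1 A" "0 \<le> (1 - t) * \<pi>2 A"
      using \<open>0 < t\<close> \<open>t < 1\<close> car_mech_nonneg[OF car1] car_mech_nonneg[OF car2] by simp_all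
    moreover have "t * \<pi>1 A + (1 - t) * \<pi>2 A = 0"
      using that \<pi> by simp
    ultimately have "t * \<pi>1 A = 0"
      by linarith
    then show ?thesis
      using \<open>0 < t\<close> by simp
  qed
  then have "car_direction E \<pi> (\<lambda>A. \<pi> A - \<pi>1 A)"
    by (rule car_direction_diff[OF car car1])
  then have "\<pi> = \<pi>1"
    by (rule car_rigid_eq[OF rigid])
  then have "\<pi>1 A = t * \<pi>1 A + (1 - t) * \<pi>2 A" for A
    using \<pi> by metis
  then have "(1 - t) * (\<pi>1 A - \<pi>2 A) = 0" for A
    by (simp add: algebra_simps)
  then have "\<pi>1 = \<pi>2"
    using \<open>t < 1\<close> by (simp add: fun_eq_iff)
  with \<open>\<pi>1 \<noteq> \<pi>2\<close> show False ..
qed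

lemma sum_subsets_containing:
  fixes f :: "'a set \<Rightarrow> real"
  assumes "finite E" "V \<subseteq> Pow E" "\<And>A. A \<notin> V \<Longrightarrow> f A = 0"
  shows "(\<Sum>A\<in>{A. A \<subseteq> E \<and> x \<in> A}. f A) = (\<Sum>A\<in>V. of_bool (x \<in> A) * f A)"
proof -
  have "{A. A \<subseteq> E \<and> x \<in> A} = {A \<in> Pow E. x \<in> A}"
    by auto
  then have "(\<Sum>A\<in>{A. A \<subseteq> E \<and> x \<in> A}. f A) = (\<Sum>A\<in>Pow E. if x \<in> A then f A else 0)"
    using assms(1) by (simp only: sum.inter_filter finite_Pow_iff)
  also have "\<dots> = (\<Sum>A\<in>Pow E. of_bool (x \<in> A) * f A)"
    by (intro sum.cong) auto
  also have "\<dots> = (\<Sum>A\<in>V. of_bool (x \<in> A) * f A)"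
    using assms by (intro sum.mono_neutral_right) auto
  finally show ?thesis .
qed

lemma car_rigid_imp_rational:
  assumes fin: "finite E" and car: "car_mech E \<pi>" and rigid: "car_rigid E \<pi>"
  shows "rational_car E \<pi>"
proof -
  let ?V = "car_support E \<pi>"
  have V: "finite ?V" "?V \<subseteq> Pow E"
    using fin unfolding car_support_def by auto
  have outside_V: "\<pi> A = 0" if "A \<notin> ?V" for A
    using that car_mech_outside[OF car] unfolding car_support_def by blast
  have "(\<Sum>A\<in>?V. of_bool (x \<in> A) * \<pi> A) = 1" if "x \<in> E" for x
    using car_mech_sum_eq_1[OF car that] sum_subsets_containing[OF fin V(2) outside_V] by simp
  then have "\<exists>z :: 'a set \<Rightarrow> real. (\<forall>A\<in>?V. z A \<in> \<rat>) \<and> (\<forall>x\<in>E. (\<Sum>A\<in>?V. of_bool (x \<in> A) * z A) = 1)"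
    by (intro rational_solution_if_real_solution[where y = \<pi>, OF V(1)]) (simp_all add: of_bool_def)
  then obtain z :: "'a set \<Rightarrow> real" where z: "\<forall>A\<in>?V. z A \<in> \<rat>" "\<forall>x\<in>E. (\<Sum>A\<in>?V. of_bool (x \<in> A) * z A) = 1"
    by blast
  define z' where "z' A = (if A \<in> ?V then z A else 0)" for A
  have "(\<Sum>A\<in>{A. A \<subseteq> E \<and> x \<in> A}. z' A) = 1" if "x \<in> E" for x
    using z(2) that sum_subsets_containing[OF fin V(2), of z'] by (simp add: z'_def)
  moreover have "z' A = 0" if "\<pi> A = 0" for A
    using that by (simp add: z'_def car_support_def)
  ultimately have "car_direction E \<pi> (\<lambda>A. \<pi> A - z' A)"
    using car_mech_sum_eq_1[OF car] unfolding car_direction_def by (simp add: sum_subtractf)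
  then have "\<pi> = z'"
    by (rule car_rigid_eq[OF rigid])
  moreover have "z' A \<in> \<rat>" for A
    using z(1) by (simp add: z'_def)
  ultimately show ?thesis
    using car unfolding rational_car_def by simp
qed

section \<open>Decomposition into rigid mechanisms\<close>

lemma car_mech_add_direction:
  assumes car: "car_mech E \<pi>" and d: "car_direction E \<pi> d"
    and nonneg: "\<And>A. 0 \<le> \<pi> A + t * d A"
  shows "car_mech E (\<lambda>A. \<pi> A + t * d A)"
  unfolding car_mech_def
proof (intro conjI allI impI ballI nonneg)
  fix A
  assume "\<not> (A \<subseteq> E \<and> A \<noteq> {})"
  then show "\<pi> A + t * d A = 0"
    using car_mech_outside[OF car] d unfolding car_direction_def by simp
next
  fix x
  assume "x \<in> E"
  then show "(\<Sum>A\<in>{A. A \<subseteq> E \<and> x \<in> A}. \<pi> A + t * d A) = 1"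
    using car_mech_sum_eq_1[OF car] d
    by (simp add: car_direction_def sum.distrib sum_distrib_left[symmetric])
qed

lemma car_direction_has_negative:
  assumes fin: "finite E" and car: "car_mech E \<pi>" and d: "car_direction E \<pi> d"
    and nonzero: "d \<noteq> (\<lambda>_. 0)"
  obtains A where "d A < 0"
proof -
  obtain A0 where "d A0 \<noteq> 0"
    using nonzero by auto
  then have "\<pi> A0 \<noteq> 0"
    using d unfolding car_direction_def by blast
  then obtain x where x: "x \<in> A0" "x \<in> E" "A0 \<subseteq> E"
    using car_mech_outside[OF car, of A0] by blast
  let ?S = "{A. A \<subseteq> E \<and> x \<in> A}"
  have "\<not> (\<forall>A. 0 \<le> d A)"
  proof
    assume "\<forall>A. 0 \<le> d A"
    moreover have "sum d ?S = 0"
      using d x(2) unfolding car_direction_def by blast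
    ultimately have "\<forall>A\<in>?S. d A = 0"
      using sum_nonneg_eq_0_iff[of ?S d] fin by simp
    then show False
      using x \<open>d A0 \<noteq> 0\<close> by blast
  qed
  then show thesis
    using that by (auto simp: not_le)
qed

lemma car_mech_shrink_support:
  assumes fin: "finite E" and car: "car_mech E \<pi>" and d: "car_direction E \<pi> d"
    and neg: "d A0 < 0"
  obtains t where "0 < t" "car_mech E (\<lambda>A. \<pi> A + t * d A)"
    "car_support E (\<lambda>A. \<pi> A + t * d A) \<subset> car_support E \<pi>"
proof -
  have pos: "0 < \<pi> A" if "d A \<noteq> 0" for A
  proof -
    have "\<pi> A \<noteq> 0"
      using that d unfolding car_direction_def by blast
    then show ?thesis
      using car_mech_nonneg[OF car, of A] by simp
  qed
  have sub: "A \<subseteq> E" if "d A \<noteq> 0" for A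
    using pos[OF that] car_mech_outside[OF car, of A] by auto
  define N where "N = {A. A \<subseteq> E \<and> d A < 0}"
  have "finite N" "A0 \<in> N"
    using fin neg sub[of A0] unfolding N_def by auto
  \<comment> \<open>the largest step along d that keeps every coordinate nonnegative\<close>
  define t where "t = Min ((\<lambda>A. \<pi> A / - d A) ` N)"
  have "t \<in> (\<lambda>A. \<pi> A / - d A) ` N"
    unfolding t_def using \<open>finite N\<close> \<open>A0 \<in> N\<close> by (intro Min_in) auto
  then obtain A1 where A1: "A1 \<in> N" "t = \<pi> A1 / - d A1"
    by blast
  have t_le: "t \<le> \<pi> A / - d A" if "A \<in> N" for A
    unfolding t_def using \<open>finite N\<close> that by simp
  have "0 < t"
    using A1 pos[of A1] unfolding N_def by (auto intro: divide_pos_neg)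
  have nonneg: "0 \<le> \<pi> A + t * d A" for A
  proof (cases "d A < 0")
    case True
    then have "A \<in> N"
      using sub[of A] unfolding N_def by simp
    then have "t * - d A \<le> \<pi> A / - d A * - d A"
      using t_le True by (intro mult_right_mono) auto
    also have "\<dots> = \<pi> A"
      using True by simp
    finally show ?thesis
      by simp
  next
    case False
    then show ?thesis
      using \<open>0 < t\<close> car_mech_nonneg[OF car, of A] by simp
  qed
  have "\<pi> A1 + t * d A1 = 0"
    using A1 unfolding N_def by simp
  moreover have "A1 \<in> car_support E \<pi>"
    using A1(1) pos[of A1] unfolding N_def car_support_def by auto
  moreover have "car_support E (\<lambda>A. \<pi> A + t * d A) \<subseteq> car_support E \<pi>"
    using d unfolding car_support_def car_direction_def by auto
  ultimately have "car_support E (\<lambda>A. \<pi> A + t * d A) \<subset> car_support E \<pi>"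
    unfolding car_support_def by blast
  then show thesis
    using that \<open>0 < t\<close> car_mech_add_direction[OF car d nonneg] by blast
qed

definition mixture_of :: "(('b \<Rightarrow> real) \<Rightarrow> bool) \<Rightarrow> (real \<times> ('b \<Rightarrow> real)) list \<Rightarrow> ('b \<Rightarrow> real) \<Rightarrow> bool"
  where "mixture_of P L f \<longleftrightarrow> L \<noteq> [] \<and> (\<forall>(w, \<sigma>)\<in>set L. 0 \<le> w \<and> P \<sigma>) \<and>
     (\<Sum>(w, \<sigma>)\<leftarrow>L. w) = 1 \<and> (\<forall>x. f x = (\<Sum>(w, \<sigma>)\<leftarrow>L. w * \<sigma> x))"

lemma mixture_of_single: "P f \<Longrightarrow> mixture_of P [(1, f)] f"
  by (simp add: mixture_of_def)

lemma sum_list_scale_weights: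
  fixes c :: real and h :: "'b \<Rightarrow> real"
  shows "(\<Sum>(w, \<sigma>)\<leftarrow>map (\<lambda>(w, \<sigma>). (c * w, \<sigma>)) L. w * h \<sigma>) = c * (\<Sum>(w, \<sigma>)\<leftarrow>L. w * h \<sigma>)"
  by (induction L) (auto simp: algebra_simps)

lemma mixture_of_convex:
  assumes L: "mixture_of P L f" and M: "mixture_of P M g" and c: "0 \<le> c" "c \<le> 1"
  shows "mixture_of P (map (\<lambda>(w, \<sigma>). (c * w, \<sigma>)) L @ map (\<lambda>(w, \<sigma>). ((1 - c) * w, \<sigma>)) M)
           (\<lambda>x. c * f x + (1 - c) * g x)"
  (is "mixture_of P (?L @ ?M) _")
proof -
  have "(\<Sum>(w, \<sigma>)\<leftarrow>?L @ ?M. w) = c * (\<Sum>(w, \<sigma>)\<leftarrow>L. w) + (1 - c) * (\<Sum>(w, \<sigma>)\<leftarrow>M. w)"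
    by (simp only: map_append sum_list_append sum_list_scale_weights[where h = "\<lambda>_. 1", unfolded mult_1_right])
  moreover have "(\<Sum>(w, \<sigma>)\<leftarrow>?L @ ?M. w * \<sigma> x)
      = c * (\<Sum>(w, \<sigma>)\<leftarrow>L. w * \<sigma> x) + (1 - c) * (\<Sum>(w, \<sigma>)\<leftarrow>M. w * \<sigma> x)" for x
    by (simp only: map_append sum_list_append sum_list_scale_weights)
  moreover have "\<forall>(w, \<sigma>)\<in>set (?L @ ?M). 0 \<le> w \<and> P \<sigma>"
    using L M c unfolding mixture_of_def by auto
  ultimately show ?thesis
    using L M unfolding mixture_of_def by auto
qed

lemma car_mech_split_non_rigid:
  assumes fin: "finite E" and car: "car_mech E \<pi>" and non_rigid: "\<not> car_rigid E \<pi>"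
  obtains \<pi>1 \<pi>2 :: "'a set \<Rightarrow> real" and c :: real
  where "0 \<le> c" "c \<le> 1" "car_mech E \<pi>1" "car_mech E \<pi>2"
    "car_support E \<pi>1 \<subset> car_support E \<pi>" "car_support E \<pi>2 \<subset> car_support E \<pi>"
    "\<pi> = (\<lambda>A. c * \<pi>1 A + (1 - c) * \<pi>2 A)"
proof -
  obtain d where d: "car_direction E \<pi> d" "d \<noteq> (\<lambda>_. 0)"
    using non_rigid unfolding car_rigid_def by blast
  then have d': "car_direction E \<pi> (\<lambda>A. - d A)" "(\<lambda>A. - d A) \<noteq> (\<lambda>_. 0)"
    using car_direction_uminus by (auto simp: fun_eq_iff)
  obtain A1 where "d A1 < 0"
    using car_direction_has_negative[OF fin car d] .
  obtain A2 where "- d A2 < 0"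
    using car_direction_has_negative[OF fin car d'] .
  obtain s where s: "0 < s" "car_mech E (\<lambda>A. \<pi> A + s * d A)"
      "car_support E (\<lambda>A. \<pi> A + s * d A) \<subset> car_support E \<pi>"
    using car_mech_shrink_support[OF fin car d(1) \<open>d A1 < 0\<close>] by blast
  obtain t where t: "0 < t" "car_mech E (\<lambda>A. \<pi> A + t * - d A)"
      "car_support E (\<lambda>A. \<pi> A + t * - d A) \<subset> car_support E \<pi>"
    using car_mech_shrink_support[OF fin car d'(1) \<open>- d A2 < 0\<close>] by blast
  define c where "c = t / (s + t)"
  have c: "0 \<le> c" "c \<le> 1" "c * s - (1 - c) * t = 0"
    using s(1) t(1) by (simp_all add: c_def field_simps)
  have "c * (\<pi> A + s * d A) + (1 - c) * (\<pi> A + t * - d A) = \<pi> A + (c * s - (1 - c) * t) * d A"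
    for A by (simp add: algebra_simps)
  then have "\<pi> = (\<lambda>A. c * (\<pi> A + s * d A) + (1 - c) * (\<pi> A + t * - d A))"
    using c(3) by simp
  with c(1,2) s(2) t(2) s(3) t(3) show thesis
    by (rule that)
qed

lemma car_mech_rigid_mixture:
  assumes fin: "finite E"
  shows "car_mech E \<pi> \<Longrightarrow> \<exists>L. mixture_of (\<lambda>\<sigma>. car_mech E \<sigma> \<and> car_rigid E \<sigma>) L \<pi>"
proof (induction "card (car_support E \<pi>)" arbitrary: \<pi> rule: less_induct)
  case less
  let ?P = "\<lambda>\<sigma>. car_mech E \<sigma> \<and> car_rigid E \<sigma>"
  show ?case
  proof (cases "car_rigid E \<pi>")
    case True
    then show ?thesis
      using less.prems mixture_of_single[of ?P] by blast
  next
    case False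
    then obtain \<pi>1 \<pi>2 c where c: "0 \<le> c" "c \<le> 1" and split:
        "car_mech E \<pi>1" "car_mech E \<pi>2"
        "car_support E \<pi>1 \<subset> car_support E \<pi>" "car_support E \<pi>2 \<subset> car_support E \<pi>"
        "\<pi> = (\<lambda>A. c * \<pi>1 A + (1 - c) * \<pi>2 A)"
      by (rule car_mech_split_non_rigid[OF fin less.prems])
    have "finite (car_support E \<pi>)"
      using fin unfolding car_support_def by simp
    then obtain L M where "mixture_of ?P L \<pi>1" "mixture_of ?P M \<pi>2"
      using less.hyps[OF psubset_card_mono[OF _ split(3)] split(1)]
        less.hyps[OF psubset_card_mono[OF _ split(4)] split(2)]
      by blast
    from mixture_of_convex[OF this c] show ?thesis
      unfolding split(5) by blast
  qed
qed

lemma mixture_of_imp_indexed: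
  assumes "mixture_of P L f"
  obtains p :: nat and w :: "nat \<Rightarrow> real" and \<sigma> where "0 < p" "\<forall>j<p. 0 \<le> w j \<and> P (\<sigma> j)" "(\<Sum>j<p. w j) = 1"
    "\<forall>x. f x = (\<Sum>j<p. w j * \<sigma> j x)"
proof (rule that[of "length L" "\<lambda>j. fst (L ! j)" "\<lambda>j. snd (L ! j)"])
  show "0 < length L" "(\<Sum>j<length L. fst (L ! j)) = 1"
      "\<forall>x. f x = (\<Sum>j<length L. fst (L ! j) * snd (L ! j) x)"
    using assms unfolding mixture_of_def
    by (simp_all add: sum_list_sum_nth atLeast0LessThan case_prod_beta)
  show "\<forall>j<length L. 0 \<le> fst (L ! j) \<and> P (snd (L ! j))"
    using assms nth_mem unfolding mixture_of_def by fastforce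
qed

lemma car_mech_eq_rigid_mixture:
  assumes "finite E" "car_mech E \<pi>"
  obtains p :: nat and w :: "nat \<Rightarrow> real" and \<sigma> :: "nat \<Rightarrow> 'a set \<Rightarrow> real"
  where "0 < p" "\<forall>j<p. 0 \<le> w j \<and> car_mech E (\<sigma> j) \<and> car_rigid E (\<sigma> j)" "(\<Sum>j<p. w j) = 1"
    "\<forall>A. \<pi> A = (\<Sum>j<p. w j * \<sigma> j A)"
proof -
  obtain L where "mixture_of (\<lambda>\<sigma>. car_mech E \<sigma> \<and> car_rigid E \<sigma>) L \<pi>"
    using car_mech_rigid_mixture[OF assms] by blast
  from mixture_of_imp_indexed[OF this] show thesis
    using that by blast
qed

section \<open>Rational approximation\<close>

lemma car_mech_mixture:
  assumes "\<forall>j<p. 0 \<le> w j \<and> car_mech E (\<sigma> j)" "(\<Sum>j<p. w j) = 1"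
  shows "car_mech E (\<lambda>A. \<Sum>j<p. w j * \<sigma> j A)"
  unfolding car_mech_def
proof (intro conjI allI impI ballI)
  fix A
  show "0 \<le> (\<Sum>j<p. w j * \<sigma> j A)"
    using assms(1) car_mech_nonneg by (intro sum_nonneg mult_nonneg_nonneg) auto
next
  fix A
  assume "\<not> (A \<subseteq> E \<and> A \<noteq> {})"
  then have "\<sigma> j A = 0" if "j < p" for j
    using assms(1) that car_mech_outside by blast
  then show "(\<Sum>j<p. w j * \<sigma> j A) = 0"
    by simp
next
  fix x
  assume "x \<in> E"
  have "(\<Sum>A\<in>{A. A \<subseteq> E \<and> x \<in> A}. \<Sum>j<p. w j * \<sigma> j A)
      = (\<Sum>j<p. w j * (\<Sum>A\<in>{A. A \<subseteq> E \<and> x \<in> A}. \<sigma> j A))"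
    by (subst sum.swap) (simp add: sum_distrib_left)
  also have "\<dots> = (\<Sum>j<p. w j)"
    using assms(1) car_mech_sum_eq_1[OF _ \<open>x \<in> E\<close>] by simp
  finally show "(\<Sum>A\<in>{A. A \<subseteq> E \<and> x \<in> A}. \<Sum>j<p. w j * \<sigma> j A) = 1"
    using assms(2) by simp
qed

lemma car_dist_mixtures_le:
  assumes fin: "finite E" and car: "\<forall>j<p. car_mech E (\<sigma> j)"
  shows "car_dist E (\<lambda>A. \<Sum>j<p. w j * \<sigma> j A) (\<lambda>A. \<Sum>j<p. q j * \<sigma> j A)
           \<le> real (card (Pow E)) * (\<Sum>j<p. \<bar>w j - q j\<bar>)"
  unfolding car_dist_def
proof (rule sum_bounded_above)
  fix A
  have "\<bar>(\<Sum>j<p. w j * \<sigma> j A) - (\<Sum>j<p. q j * \<sigma> j A)\<bar> = \<bar>\<Sum>j<p. (w j - q j) * \<sigma> j A\<bar>"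
    by (simp add: sum_subtractf left_diff_distrib)
  also have "\<dots> \<le> (\<Sum>j<p. \<bar>(w j - q j) * \<sigma> j A\<bar>)"
    by (rule sum_abs)
  also have "\<dots> \<le> (\<Sum>j<p. \<bar>w j - q j\<bar>)"
  proof (rule sum_mono)
    fix j
    assume "j \<in> {..<p}"
    then have "0 \<le> \<sigma> j A" "\<sigma> j A \<le> 1"
      using car car_mech_nonneg car_mech_le_1[OF fin] by auto
    then show "\<bar>(w j - q j) * \<sigma> j A\<bar> \<le> \<bar>w j - q j\<bar>"
      by (simp add: abs_mult mult_left_le)
  qed
  finally show "\<bar>(\<Sum>j<p. w j * \<sigma> j A) - (\<Sum>j<p. q j * \<sigma> j A)\<bar> \<le> (\<Sum>j<p. \<bar>w j - q j\<bar>)" .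
qed

lemma Rats_approx_below:
  fixes w \<delta> :: real
  assumes "0 \<le> w" "0 < \<delta>"
  obtains q where "q \<in> \<rat>" "0 \<le> q" "q \<le> w" "w - q < \<delta>"
proof (cases "w < \<delta>")
  case True
  then show thesis
    using that[of 0] assms by simp
next
  case False
  then obtain q where "q \<in> \<rat>" "w - \<delta> < q" "q < w"
    using Rats_dense_in_real[of "w - \<delta>" w] assms by auto
  then show thesis
    using that[of q] False assms by simp
qed

text \<open>Round every weight down to a rational and give the total rounding error to the
  first weight.\<close>
lemma rational_weights_approx:
  fixes w :: "nat \<Rightarrow> real"
  assumes p: "0 < p" and w: "\<forall>j<p. 0 \<le> w j" "(\<Sum>j<p. w j) = 1" and \<delta>: "0 < \<delta>"
  obtains q where "\<forall>j<p. q j \<in> \<rat> \<and> 0 \<le> q j" "(\<Sum>j<p. q j) = 1" "(\<Sum>j<p. \<bar>w j - q j\<bar>) < \<delta>"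
proof -
  define \<eta> where "\<eta> = \<delta> / (2 * real p)"
  have "0 < \<eta>"
    using p \<delta> by (simp add: \<eta>_def)
  have "\<exists>r. r \<in> \<rat> \<and> 0 \<le> r \<and> r \<le> w j \<and> w j - r < \<eta>" if "j < p" for j
    using Rats_approx_below[of "w j" \<eta>] w(1) that \<open>0 < \<eta>\<close> by blast
  then obtain r where r: "\<forall>j<p. r j \<in> \<rat> \<and> 0 \<le> r j \<and> r j \<le> w j \<and> w j - r j < \<eta>"
    by metis
  define e where "e = (\<Sum>j<p. w j - r j)"
  have "0 \<le> e"
    using r unfolding e_def by (intro sum_nonneg) auto
  have "e < (\<Sum>j<p. \<eta>)"
    using r p unfolding e_def by (intro sum_strict_mono) auto
  then have e_less: "2 * e < \<delta>"
    using p by (simp add: \<eta>_def)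
  define q where "q j = r j + (if j = 0 then e else 0)" for j
  have "e \<in> \<rat>"
    using r w(2) unfolding e_def by (simp add: sum_subtractf) (intro Rats_diff Rats_sum; auto)
  then have "\<forall>j<p. q j \<in> \<rat> \<and> 0 \<le> q j"
    using r \<open>0 \<le> e\<close> by (simp add: q_def)
  moreover have "(\<Sum>j<p. q j) = 1"
    using p w(2) by (simp add: q_def e_def sum.distrib sum_subtractf)
  moreover have "(\<Sum>j<p. \<bar>w j - q j\<bar>) \<le> (\<Sum>j<p. (w j - r j) + (if j = 0 then e else 0))"
    using r \<open>0 \<le> e\<close> by (intro sum_mono) (auto simp: q_def)
  then have "(\<Sum>j<p. \<bar>w j - q j\<bar>) \<le> 2 * e"
    using p by (simp add: sum.distrib e_def)
  ultimately show thesis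
    using that e_less by simp
qed

lemma rational_car_dense:
  assumes fin: "finite E" and car: "car_mech E \<pi>" and \<epsilon>: "0 < \<epsilon>"
  shows "\<exists>\<pi>'. rational_car E \<pi>' \<and> car_dist E \<pi> \<pi>' < \<epsilon>"
proof -
  obtain p :: nat and w :: "nat \<Rightarrow> real" and \<sigma> :: "nat \<Rightarrow> 'a set \<Rightarrow> real"
    where p: "0 < p" and mix: "\<forall>j<p. 0 \<le> w j \<and> car_mech E (\<sigma> j) \<and> car_rigid E (\<sigma> j)"
      and w: "(\<Sum>j<p. w j) = 1" and \<pi>: "\<forall>A. \<pi> A = (\<Sum>j<p. w j * \<sigma> j A)"
    by (rule car_mech_eq_rigid_mixture[OF fin car])
  have car_\<sigma>: "\<forall>j<p. car_mech E (\<sigma> j)"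
    using mix by blast
  have rat_\<sigma>: "\<sigma> j A \<in> \<rat>" if "j < p" for j A
    using car_rigid_imp_rational[OF fin] mix that unfolding rational_car_def by blast
  let ?N = "real (card (Pow E))"
  have "0 < ?N"
    using fin by (auto simp: card_gt_0_iff)
  then have "0 < \<epsilon> / ?N"
    using \<epsilon> by simp
  moreover have "\<forall>j<p. 0 \<le> w j"
    using mix by blast
  ultimately obtain q :: "nat \<Rightarrow> real" where q: "\<forall>j<p. q j \<in> \<rat> \<and> 0 \<le> q j" "(\<Sum>j<p. q j) = 1"
      "(\<Sum>j<p. \<bar>w j - q j\<bar>) < \<epsilon> / ?N"
    using rational_weights_approx[OF p _ w] by blast
  define \<pi>' where "\<pi>' A = (\<Sum>j<p. q j * \<sigma> j A)" for A
  have "car_mech E \<pi>'"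
    unfolding \<pi>'_def using q car_\<sigma> by (intro car_mech_mixture) auto
  moreover have "\<pi>' A \<in> \<rat>" for A
    unfolding \<pi>'_def using q rat_\<sigma> by (intro Rats_sum Rats_mult) auto
  ultimately have "rational_car E \<pi>'"
    unfolding rational_car_def by blast
  have "\<pi> = (\<lambda>A. \<Sum>j<p. w j * \<sigma> j A)"
    using \<pi> by blast
  then have "car_dist E \<pi> \<pi>' \<le> ?N * (\<Sum>j<p. \<bar>w j - q j\<bar>)"
    unfolding \<pi>'_def using car_dist_mixtures_le[OF fin car_\<sigma>] by simp
  also have "?N * (\<Sum>j<p. \<bar>w j - q j\<bar>) < \<epsilon>"
    using q(3) \<open>0 < ?N\<close> by (simp add: pos_less_divide_eq mult.commute)
  finally show ?thesis
    using \<open>rational_car E \<pi>'\<close> by blast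
qed

section \<open>Rational mechanisms and uniform multicovers\<close>

lemma Rats_common_denominator:
  fixes f :: "'b \<Rightarrow> real"
  assumes "finite S" "\<forall>x\<in>S. f x \<in> \<rat>"
  shows "\<exists>D::nat. 0 < D \<and> (\<forall>x\<in>S. real D * f x \<in> \<int>)"
  using assms
proof (induction S rule: finite_induct)
  case empty
  show ?case
    by (intro exI[of _ 1]) simp
next
  case (insert a S)
  then obtain D :: nat where D: "0 < D" "\<forall>x\<in>S. real D * f x \<in> \<int>"
    by auto
  obtain m n where mn: "0 < n" "f a = of_int m / of_int n"
    using insert.prems by (auto elim: Rats_cases')
  have "real (D * nat n) * f a = of_int (int D * m)"
    using mn by simp
  moreover have "real (D * nat n) * f x = of_int n * (real D * f x)" for x
    using mn(1) by simp
  ultimately have "\<forall>x\<in>insert a S. real (D * nat n) * f x \<in> \<int>"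
    using D(2) by (metis Ints_mult Ints_of_int insert_iff)
  then show ?case
    using D(1) mn(1) by (intro exI[of _ "D * nat n"]) simp
qed

lemma size_filter_mset_eq_sum_count:
  assumes "finite S" "set_mset C \<subseteq> S"
  shows "size (filter_mset P C) = (\<Sum>a\<in>S. if P a then count C a else 0)"
proof -
  have "size (filter_mset P C) = (\<Sum>a\<in>set_mset (filter_mset P C). count (filter_mset P C) a)"
    by (rule size_multiset_overloaded_eq)
  also have "\<dots> = (\<Sum>a\<in>S. count (filter_mset P C) a)"
    using assms by (intro sum.mono_neutral_left) auto
  finally show ?thesis
    by simp
qed

lemma rational_car_integral_multiple:
  assumes fin: "finite E" and rat: "rational_car E \<sigma>"
  obtains D :: nat and n :: "'a set \<Rightarrow> nat" where "0 < D" "\<And>A. real (n A) = real D * \<sigma> A"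
proof -
  have car: "car_mech E \<sigma>"
    using rat unfolding rational_car_def by blast
  obtain D :: nat where D: "0 < D" "\<forall>A\<in>Pow E. real D * \<sigma> A \<in> \<int>"
    using Rats_common_denominator[of "Pow E" \<sigma>] fin rat unfolding rational_car_def by auto
  have "real (nat \<lfloor>real D * \<sigma> A\<rfloor>) = real D * \<sigma> A" for A
  proof (cases "A \<in> Pow E")
    case True
    then obtain m where "real D * \<sigma> A = of_int m"
      using D(2) Ints_cases by metis
    moreover have "0 \<le> real D * \<sigma> A"
      using car_mech_nonneg[OF car] by simp
    ultimately show ?thesis
      by simp
  next
    case False
    then show ?thesis
      using car_mech_outside[OF car] by simp
  qed
  with D(1) show thesis
    by (rule that)
qed

lemma car_mech_generated_by_counts:
  assumes fin: "finite E" and car: "car_mech E \<sigma>" and D: "0 < D"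
    and n: "\<And>A. real (n A) = real D * \<sigma> A"
  shows "uniform_multicover E (Abs_multiset n) D \<and> \<sigma> = generated_mech (Abs_multiset n) D"
proof -
  have outside: "\<sigma> A = 0" if "A \<notin> Pow E" for A
    using that car_mech_outside[OF car] by blast
  have in_Pow: "A \<in> Pow E" if "0 < n A" for A
    using that n[of A] outside by (cases "A \<in> Pow E") auto
  then have "finite {A. 0 < n A}"
    using fin by (blast intro: finite_subset)
  then have count_C: "count (Abs_multiset n) A = n A" for A
    by (simp add: count_Abs_multiset)
  let ?C = "Abs_multiset n"
  have "\<sigma> = generated_mech ?C D"
    using n D by (simp add: fun_eq_iff generated_mech_def count_C)
  moreover have members: "A \<subseteq> E \<and> A \<noteq> {}" if "A \<in># ?C" for A
  proof -
    have "0 < n A"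
      using that count_greater_zero_iff[of ?C A] by (simp add: count_C)
    then have "\<sigma> A \<noteq> 0"
      using n[of A] by auto
    then show ?thesis
      using car_mech_outside[OF car] by blast
  qed
  moreover have "size (filter_mset (\<lambda>A. x \<in> A) ?C) = D" if "x \<in> E" for x
  proof -
    have "set_mset ?C \<subseteq> Pow E"
      using members by blast
    then have "size (filter_mset (\<lambda>A. x \<in> A) ?C) = (\<Sum>A\<in>Pow E. if x \<in> A then n A else 0)"
      using size_filter_mset_eq_sum_count[of "Pow E" ?C "\<lambda>A. x \<in> A"] fin unfolding count_C by simp
    then have "real (size (filter_mset (\<lambda>A. x \<in> A) ?C)) = (\<Sum>A\<in>Pow E. real (if x \<in> A then n A else 0))"
      by (simp only: of_nat_sum)
    also have "\<dots> = (\<Sum>A\<in>Pow E. of_bool (x \<in> A) * real (n A))"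
      by (intro sum.cong) auto
    also have "\<dots> = real D * (\<Sum>A\<in>{A. A \<subseteq> E \<and> x \<in> A}. \<sigma> A)"
      using sum_subsets_containing[OF fin subset_refl outside]
      by (simp add: n sum_distrib_left algebra_simps)
    also have "\<dots> = real D"
      using car_mech_sum_eq_1[OF car that] by simp
    finally show ?thesis
      by simp
  qed
  ultimately show ?thesis
    using D unfolding uniform_multicover_def by blast
qed

lemma rational_car_generated_by_multicover:
  assumes fin: "finite E" and rat: "rational_car E \<sigma>"
  shows "\<exists>C k. uniform_multicover E C k \<and> \<sigma> = generated_mech C k"
proof -
  obtain D :: nat and n :: "'a set \<Rightarrow> nat" where "0 < D" "\<And>A. real (n A) = real D * \<sigma> A"
    using rational_car_integral_multiple[OF fin rat] by blast
  moreover have "car_mech E \<sigma>"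
    using rat unfolding rational_car_def by blast
  ultimately show ?thesis
    using car_mech_generated_by_counts[OF fin] by blast
qed

lemma car_mech_eq_multicover_mixture:
  assumes fin: "finite E" and car: "car_mech E \<pi>"
  shows "\<exists>(p::nat) (w::nat \<Rightarrow> real) (\<sigma>::nat \<Rightarrow> 'a set \<Rightarrow> real)
      (C::nat \<Rightarrow> 'a set multiset) (k::nat \<Rightarrow> nat).
    0 < p \<and> (\<forall>j<p. 0 \<le> w j) \<and> (\<Sum>j<p. w j) = 1 \<and>
    (\<forall>j<p. extreme_car E (\<sigma> j) \<and> rational_car E (\<sigma> j) \<and>
       uniform_multicover E (C j) (k j) \<and> \<sigma> j = generated_mech (C j) (k j)) \<and>
    (\<forall>A. \<pi> A = (\<Sum>j<p. w j * \<sigma> j A))"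
proof -
  obtain p :: nat and w :: "nat \<Rightarrow> real" and \<sigma> :: "nat \<Rightarrow> 'a set \<Rightarrow> real"
    where mix: "0 < p" "\<forall>j<p. 0 \<le> w j \<and> car_mech E (\<sigma> j) \<and> car_rigid E (\<sigma> j)"
      "(\<Sum>j<p. w j) = 1" "\<forall>A. \<pi> A = (\<Sum>j<p. w j * \<sigma> j A)"
    by (rule car_mech_eq_rigid_mixture[OF fin car])
  have extreme_rational: "\<forall>j<p. extreme_car E (\<sigma> j) \<and> rational_car E (\<sigma> j)"
    using mix(2) car_rigid_imp_extreme car_rigid_imp_rational[OF fin] by blast
  then have "\<forall>j. \<exists>C k. j < p \<longrightarrow> uniform_multicover E C k \<and> \<sigma> j = generated_mech C k"
    using rational_car_generated_by_multicover[OF fin] by blast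
  then obtain C k where "\<forall>j<p. uniform_multicover E (C j) (k j) \<and> \<sigma> j = generated_mech (C j) (k j)"
    by metis
  with mix extreme_rational show ?thesis
    by blast
qed

theorem theorem2:
  fixes E :: "'a set"
  assumes "finite E" and "E \<noteq> {}"
  shows "(\<forall>\<pi> \<epsilon>. car_mech E \<pi> \<and> \<epsilon> > 0 \<longrightarrow>
            (\<exists>\<pi>'. rational_car E \<pi>' \<and> car_dist E \<pi> \<pi>' < \<epsilon>))
       \<and> (\<forall>\<pi>. car_mech E \<pi> \<longrightarrow>
            (\<exists>(p::nat) (w::nat \<Rightarrow> real) (\<sigma>::nat \<Rightarrow> 'a set \<Rightarrow> real)
                (C::nat \<Rightarrow> 'a set multiset) (k::nat \<Rightarrow> nat).
               p > 0 \<and> (\<forall>j<p. w j \<ge> 0) \<and> (\<Sum>j<p. w j) = 1 \<and>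
               (\<forall>j<p. extreme_car E (\<sigma> j) \<and> rational_car E (\<sigma> j) \<and>
                      uniform_multicover E (C j) (k j) \<and>
                      \<sigma> j = generated_mech (C j) (k j)) \<and>
               (\<forall>A. \<pi> A = (\<Sum>j<p. w j * \<sigma> j A))))"
  using rational_car_dense[OF assms(1)] car_mech_eq_multicover_mixture[OF assms(1)] by blast

end
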